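(* Let $\mathcal{X}$ be a finite set, $\pi$ a probability mass function on $\mathcal{X}$ with full support, and $P$ an ergodic $\pi$-reversible transition matrix all of whose eigenvalues are non-negative. Let a group $\mathcal{G}$ act on $\mathcal{X}$, and let $G$, $M$, $B$ be the associated Gibbs, Metropolis–Hastings and Barker orbit kernels. Then $V(GPG)\le V(MPM)\le V(P)$ and $V(GPG)\le V(BPB)\le V(P)$.
   Context: With $\mathcal{O}(x)$ the orbit of $x$: $G(x,y)=\pi(y)/\pi(\mathcal{O}(x))$ for $y\in\mathcal{O}(x)$, else $0$; $M(x,y)=\frac{1}{|\mathcal{O}(x)|-1}\min\{1,\pi(y)/\pi(x)\}$ for $y\in\mathcal{O}(x)\setminus\{x\}$, $0$ off the orbit, $M(x,x)=1-\sum_{y\ne x}M(x,y)$; $B$ is the same with acceptance $\pi(y)/(\pi(x)+\pi(y))$. For $f\in\ell^2_0(\pi)=\{f:\sum_xf(x)\pi(x)=0\}$, $v(f,K)=\lim_n\frac1n\mathrm{Var}(\sum_{i=1}^nf(X_i))$ is the asymptotic variance under the $\pi$-stationary kernel $K$, and the worst-case asymptotic variance is $V(K)=\sup\{v(f,K):f\in\ell^2_0(\pi),\ \|f\|_\pi=1\}$, where $\|f\|_\pi^2=\sum_xf(x)^2\pi(x)$; for reversible $K$ this equals $(1+\lambda_2(K))/(1-\lambda_2(K))$ with $\lambda_2$ the second largest eigenvalue. *)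

theory Defs
  imports "HOL-Analysis.Analysis" "HOL-Algebra.Group_Action"
begin

text \<open>Transition kernels on a finite state space 'a are represented as matrices
  K :: 'a \<Rightarrow> 'a \<Rightarrow> real, K x y being the probability of moving from x to y.\<close>

definition kmult :: "('a::finite \<Rightarrow> 'a \<Rightarrow> real) \<Rightarrow> ('a \<Rightarrow> 'a \<Rightarrow> real) \<Rightarrow> 'a \<Rightarrow> 'a \<Rightarrow> real" where
  "kmult K L = (\<lambda>x y. \<Sum>z\<in>UNIV. K x z * L z y)"

definition kid :: "'a \<Rightarrow> 'a \<Rightarrow> real" where
  "kid = (\<lambda>x y. if x = y then 1 else 0)"

fun kpow :: "('a::finite \<Rightarrow> 'a \<Rightarrow> real) \<Rightarrow> nat \<Rightarrow> 'a \<Rightarrow> 'a \<Rightarrow> real" where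
  "kpow K 0 = kid"
| "kpow K (Suc n) = kmult K (kpow K n)"

definition kapply :: "('a::finite \<Rightarrow> 'a \<Rightarrow> real) \<Rightarrow> ('a \<Rightarrow> real) \<Rightarrow> 'a \<Rightarrow> real" where
  "kapply K f = (\<lambda>x. \<Sum>y\<in>UNIV. K x y * f y)"

definition pmf_full :: "('a::finite \<Rightarrow> real) \<Rightarrow> bool" where
  "pmf_full \<pi> \<longleftrightarrow> (\<forall>x. \<pi> x > 0) \<and> (\<Sum>x\<in>UNIV. \<pi> x) = 1"

definition stochastic :: "('a::finite \<Rightarrow> 'a \<Rightarrow> real) \<Rightarrow> bool" where
  "stochastic K \<longleftrightarrow> (\<forall>x y. K x y \<ge> 0) \<and> (\<forall>x. (\<Sum>y\<in>UNIV. K x y) = 1)"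

definition reversible :: "('a \<Rightarrow> real) \<Rightarrow> ('a \<Rightarrow> 'a \<Rightarrow> real) \<Rightarrow> bool" where
  "reversible \<pi> K \<longleftrightarrow> (\<forall>x y. \<pi> x * K x y = \<pi> y * K y x)"

definition irreducible_kernel :: "('a::finite \<Rightarrow> 'a \<Rightarrow> real) \<Rightarrow> bool" where
  "irreducible_kernel K \<longleftrightarrow> (\<forall>x y. \<exists>n. kpow K n x y > 0)"

definition aperiodic_kernel :: "('a::finite \<Rightarrow> 'a \<Rightarrow> real) \<Rightarrow> bool" where
  "aperiodic_kernel K \<longleftrightarrow> (\<forall>x. Gcd {n. n > 0 \<and> kpow K n x x > 0} = 1)"

definition ergodic_kernel :: "('a::finite \<Rightarrow> 'a \<Rightarrow> real) \<Rightarrow> bool" where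
  "ergodic_kernel K \<longleftrightarrow> stochastic K \<and> irreducible_kernel K \<and> aperiodic_kernel K"

definition kernel_eigenvalue :: "('a::finite \<Rightarrow> 'a \<Rightarrow> real) \<Rightarrow> complex \<Rightarrow> bool" where
  "kernel_eigenvalue K mu \<longleftrightarrow>
     (\<exists>v :: 'a \<Rightarrow> complex. v \<noteq> (\<lambda>_. 0) \<and> (\<forall>x. (\<Sum>y\<in>UNIV. complex_of_real (K x y) * v y) = mu * v x))"

definition gibbs_kernel :: "_ \<Rightarrow> ('g \<Rightarrow> 'a \<Rightarrow> 'a) \<Rightarrow> ('a::finite \<Rightarrow> real) \<Rightarrow> 'a \<Rightarrow> 'a \<Rightarrow> real" where
  "gibbs_kernel G \<phi> \<pi> = (\<lambda>x y. if y \<in> orbit G \<phi> x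
       then \<pi> y / (\<Sum>z\<in>orbit G \<phi> x. \<pi> z) else 0)"

definition orbit_mh_kernel :: "(real \<Rightarrow> real \<Rightarrow> real) \<Rightarrow> _ \<Rightarrow> ('g \<Rightarrow> 'a \<Rightarrow> 'a) \<Rightarrow> ('a::finite \<Rightarrow> real) \<Rightarrow> 'a \<Rightarrow> 'a \<Rightarrow> real" where
  "orbit_mh_kernel acc G \<phi> \<pi> =
     (let off = (\<lambda>x y. if y \<in> orbit G \<phi> x - {x}
                    then (1 / (real (card (orbit G \<phi> x)) - 1)) * acc (\<pi> x) (\<pi> y) else 0)
      in (\<lambda>x y. if x = y then 1 - (\<Sum>z\<in>UNIV - {x}. off x z) else off x y))"

definition metropolis_kernel :: "_ \<Rightarrow> ('g \<Rightarrow> 'a \<Rightarrow> 'a) \<Rightarrow> ('a::finite \<Rightarrow> real) \<Rightarrow> 'a \<Rightarrow> 'a \<Rightarrow> real" where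
  "metropolis_kernel = orbit_mh_kernel (\<lambda>px py. min 1 (py / px))"

definition barker_kernel :: "_ \<Rightarrow> ('g \<Rightarrow> 'a \<Rightarrow> 'a) \<Rightarrow> ('a::finite \<Rightarrow> real) \<Rightarrow> 'a \<Rightarrow> 'a \<Rightarrow> real" where
  "barker_kernel = orbit_mh_kernel (\<lambda>px py. py / (px + py))"

text \<open>Variance of the partial sum f(X_1)+...+f(X_n) of the stationary chain
  (X_1 ~ pi) driven by K, written via covariances:
  Cov(f(X_i), f(X_j)) = sum_x pi(x) f(x) (K^|i-j| f)(x) - (pi f)^2.\<close>
definition partial_sum_variance :: "('a::finite \<Rightarrow> real) \<Rightarrow> ('a \<Rightarrow> 'a \<Rightarrow> real) \<Rightarrow> ('a \<Rightarrow> real) \<Rightarrow> nat \<Rightarrow> real" where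
  "partial_sum_variance \<pi> K f n =
     (\<Sum>i\<in>{1..n}. \<Sum>j\<in>{1..n}.
        (\<Sum>x\<in>UNIV. \<pi> x * f x * kapply (kpow K (nat \<bar>int i - int j\<bar>)) f x)
        - (\<Sum>x\<in>UNIV. \<pi> x * f x)^2)"

definition asym_var :: "('a::finite \<Rightarrow> real) \<Rightarrow> ('a \<Rightarrow> 'a \<Rightarrow> real) \<Rightarrow> ('a \<Rightarrow> real) \<Rightarrow> ereal" where
  "asym_var \<pi> K f = lim (\<lambda>n. ereal (partial_sum_variance \<pi> K f n / real n))"

definition worst_asym_var :: "('a::finite \<Rightarrow> real) \<Rightarrow> ('a \<Rightarrow> 'a \<Rightarrow> real) \<Rightarrow> ereal" where
  "worst_asym_var \<pi> K = (SUP f\<in>{f. (\<Sum>x\<in>UNIV. f x * \<pi> x) = 0 \<and> (\<Sum>x\<in>UNIV. (f x)^2 * \<pi> x) = 1}.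
      asym_var \<pi> K f)"

end

theory Submission
  imports Defs
begin

text \<open>
  All kernels involved are self-adjoint for the \<pi>-weighted inner product. If such a kernel K is
  positive semidefinite on the centred functions and its Rayleigh quotient there is bounded by
  \<lambda> < 1, the autocovariances \<langle>f, K^k f\<rangle> of a centred unit vector f lie between 0 and \<lambda>^k,
  with equality along a top eigenvector. Hence V(K) = (1 + \<lambda>) / (1 - \<lambda>) for the best such \<lambda>,
  and comparing worst-case asymptotic variances reduces to comparing Rayleigh bounds.
  The Metropolis and Barker kernels Q are \<pi>-contractions, so
  \<langle>g, QPQ g\<rangle> = \<langle>Qg, P Qg\<rangle> \<le> \<lambda>(P) \<parallel>Qg\<parallel>^2 \<le> \<lambda>(P) \<parallel>g\<parallel>^2.
  Moreover Q only moves within orbits, hence fixes the orbit-invariant functions, among them the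
  range of the Gibbs kernel G; therefore
  \<langle>g, GPG g\<rangle> = \<langle>QGg, P QGg\<rangle> = \<langle>Gg, QPQ Gg\<rangle> \<le> \<lambda>(QPQ) \<parallel>Gg\<parallel>^2 \<le> \<lambda>(QPQ) \<parallel>g\<parallel>^2.
\<close>

section \<open>Kernels as operators and the \<pi>-weighted inner product\<close>

lemma kapply_add: "kapply K (\<lambda>x. f x + g x) = (\<lambda>x. kapply K f x + kapply K g x)"
  unfolding kapply_def by (simp add: algebra_simps sum.distrib)

lemma kapply_scale: "kapply K (\<lambda>x. c * f x) = (\<lambda>x. c * kapply K f x)"
  unfolding kapply_def by (simp add: algebra_simps sum_distrib_left)

lemma kapply_kmult: "kapply (kmult A B) f = kapply A (kapply B f)"
  unfolding kapply_def kmult_def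
  by (auto simp: sum_distrib_left sum_distrib_right algebra_simps intro!: ext sum.swap)

lemma kapply_kid [simp]: "kapply kid f = f"
  unfolding kapply_def kid_def by (simp add: of_bool_def[symmetric])

lemma kapply_kpow_add: "kapply (kpow K (m + n)) f = kapply (kpow K m) (kapply (kpow K n) f)"
  by (induction m) (simp_all add: kapply_kmult)

lemma kapply_kpow_Suc_right: "kapply (kpow K (Suc n)) f = kapply (kpow K n) (kapply K f)"
  using kapply_kpow_add[of K n 1] by (simp add: kapply_kmult)

lemma kapply_const_if_stochastic: "stochastic K \<Longrightarrow> kapply K (\<lambda>_. c) = (\<lambda>_. c)"
  unfolding stochastic_def kapply_def by (simp add: sum_distrib_right[symmetric])

definition kshift :: "real \<Rightarrow> ('a::finite \<Rightarrow> 'a \<Rightarrow> real) \<Rightarrow> 'a \<Rightarrow> 'a \<Rightarrow> real" where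
  "kshift c K = (\<lambda>x y. c * kid x y - K x y)"

lemma kapply_kshift: "kapply (kshift c K) f = (\<lambda>x. c * f x - kapply K f x)"
proof -
  have "kapply (kshift c K) f x = c * kapply kid f x - kapply K f x" for x
    unfolding kshift_def kapply_def by (simp add: algebra_simps sum_subtractf sum_distrib_left)
  then show ?thesis by auto
qed

definition pinner :: "('a::finite \<Rightarrow> real) \<Rightarrow> ('a \<Rightarrow> real) \<Rightarrow> ('a \<Rightarrow> real) \<Rightarrow> real" where
  "pinner \<pi> f g = (\<Sum>x\<in>UNIV. \<pi> x * f x * g x)"

lemma pinner_commute: "pinner \<pi> f g = pinner \<pi> g f"
  unfolding pinner_def by (simp add: algebra_simps)

lemma pinner_add_left: "pinner \<pi> (\<lambda>x. f x + g x) h = pinner \<pi> f h + pinner \<pi> g h"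
  unfolding pinner_def by (simp add: algebra_simps sum.distrib)

lemma pinner_add_right: "pinner \<pi> h (\<lambda>x. f x + g x) = pinner \<pi> h f + pinner \<pi> h g"
  unfolding pinner_def by (simp add: algebra_simps sum.distrib)

lemma pinner_diff_left: "pinner \<pi> (\<lambda>x. f x - g x) h = pinner \<pi> f h - pinner \<pi> g h"
  unfolding pinner_def by (simp add: algebra_simps sum_subtractf)

lemma pinner_diff_right: "pinner \<pi> h (\<lambda>x. f x - g x) = pinner \<pi> h f - pinner \<pi> h g"
  unfolding pinner_def by (simp add: algebra_simps sum_subtractf)

lemma pinner_scale_left: "pinner \<pi> (\<lambda>x. c * f x) g = c * pinner \<pi> f g"
  unfolding pinner_def by (simp add: algebra_simps sum_distrib_left)

lemma pinner_scale_right: "pinner \<pi> f (\<lambda>x. c * g x) = c * pinner \<pi> f g"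
  unfolding pinner_def by (simp add: algebra_simps sum_distrib_left)

lemma pinner_minus_right: "pinner \<pi> f (\<lambda>x. - g x) = - pinner \<pi> f g"
  unfolding pinner_def by (simp add: sum_negf)

lemmas pinner_linear =
  pinner_add_left pinner_add_right pinner_diff_left pinner_diff_right pinner_scale_left pinner_scale_right
  pinner_minus_right

lemma pinner_zero_left [simp]: "pinner \<pi> (\<lambda>_. 0) g = 0"
  unfolding pinner_def by simp

lemma pinner_self_nonneg: "(\<And>x. 0 \<le> \<pi> x) \<Longrightarrow> 0 \<le> pinner \<pi> f f"
  unfolding pinner_def by (intro sum_nonneg) (simp add: mult.assoc)

lemma pinner_self_eq_0_iff:
  assumes "\<And>x. 0 < \<pi> x"
  shows "pinner \<pi> f f = 0 \<longleftrightarrow> f = (\<lambda>_. 0)"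
proof
  assume "pinner \<pi> f f = 0"
  then have "\<forall>x\<in>UNIV. \<pi> x * f x * f x = 0"
    unfolding pinner_def using assms by (subst (asm) sum_nonneg_eq_0_iff) (auto simp: less_imp_le mult.assoc)
  then show "f = (\<lambda>_. 0)" using assms by (auto intro!: ext) (metis less_irrefl)
qed simp

definition centered :: "('a::finite \<Rightarrow> real) \<Rightarrow> ('a \<Rightarrow> real) set" where
  "centered \<pi> = {f. (\<Sum>x\<in>UNIV. f x * \<pi> x) = 0}"

definition unit_centered :: "('a::finite \<Rightarrow> real) \<Rightarrow> ('a \<Rightarrow> real) set" where
  "unit_centered \<pi> = {f \<in> centered \<pi>. pinner \<pi> f f = 1}"

lemma centered_iff_pinner_one: "f \<in> centered \<pi> \<longleftrightarrow> pinner \<pi> f (\<lambda>_. 1) = 0"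
  unfolding centered_def pinner_def by (simp add: mult.commute)

lemma centered_lincomb: "f \<in> centered \<pi> \<Longrightarrow> g \<in> centered \<pi> \<Longrightarrow> (\<lambda>x. a * f x + b * g x) \<in> centered \<pi>"
  unfolding centered_iff_pinner_one by (simp add: pinner_linear)

lemma worst_asym_var_unit_centered: "worst_asym_var \<pi> K = (SUP f\<in>unit_centered \<pi>. asym_var \<pi> K f)"
  unfolding worst_asym_var_def unit_centered_def centered_def pinner_def
  by (simp add: power2_eq_square mult_ac)

section \<open>Self-adjoint and reversible kernels\<close>

definition self_adjoint :: "('a::finite \<Rightarrow> real) \<Rightarrow> ('a \<Rightarrow> 'a \<Rightarrow> real) \<Rightarrow> bool" where
  "self_adjoint \<pi> K \<longleftrightarrow> (\<forall>f g. pinner \<pi> (kapply K f) g = pinner \<pi> f (kapply K g))"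

definition preserves_centered :: "('a::finite \<Rightarrow> real) \<Rightarrow> ('a \<Rightarrow> 'a \<Rightarrow> real) \<Rightarrow> bool" where
  "preserves_centered \<pi> K \<longleftrightarrow> (\<forall>f\<in>centered \<pi>. kapply K f \<in> centered \<pi>)"

definition centered_psd :: "('a::finite \<Rightarrow> real) \<Rightarrow> ('a \<Rightarrow> 'a \<Rightarrow> real) \<Rightarrow> bool" where
  "centered_psd \<pi> K \<longleftrightarrow> (\<forall>g\<in>centered \<pi>. 0 \<le> pinner \<pi> g (kapply K g))"

definition rayleigh_bound :: "('a::finite \<Rightarrow> real) \<Rightarrow> ('a \<Rightarrow> 'a \<Rightarrow> real) \<Rightarrow> real \<Rightarrow> bool" where
  "rayleigh_bound \<pi> K lam \<longleftrightarrow> (\<forall>g\<in>centered \<pi>. pinner \<pi> g (kapply K g) \<le> lam * pinner \<pi> g g)"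

lemma self_adjoint_if_reversible:
  assumes "reversible \<pi> K"
  shows "self_adjoint \<pi> K"
  unfolding self_adjoint_def
proof (intro allI)
  fix f g :: "'a \<Rightarrow> real"
  have "pinner \<pi> (kapply K f) g = (\<Sum>x\<in>UNIV. \<Sum>y\<in>UNIV. (\<pi> x * K x y) * (f y * g x))"
    by (simp add: pinner_def kapply_def sum_distrib_left sum_distrib_right algebra_simps)
  also have "\<dots> = (\<Sum>x\<in>UNIV. \<Sum>y\<in>UNIV. (\<pi> y * K y x) * (f y * g x))"
    using assms by (simp add: reversible_def)
  also have "\<dots> = (\<Sum>y\<in>UNIV. \<Sum>x\<in>UNIV. (\<pi> y * K y x) * (f y * g x))"
    by (rule sum.swap)
  also have "\<dots> = pinner \<pi> f (kapply K g)"
    by (simp add: pinner_def kapply_def sum_distrib_left algebra_simps)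
  finally show "pinner \<pi> (kapply K f) g = pinner \<pi> f (kapply K g)" .
qed

lemma preserves_centered_if_stochastic:
  "self_adjoint \<pi> K \<Longrightarrow> stochastic K \<Longrightarrow> preserves_centered \<pi> K"
  unfolding preserves_centered_def self_adjoint_def
  by (simp add: centered_iff_pinner_one kapply_const_if_stochastic)

lemma self_adjoint_kpow:
  assumes "self_adjoint \<pi> K"
  shows "self_adjoint \<pi> (kpow K n)"
proof (induction n)
  case 0
  show ?case by (simp add: self_adjoint_def)
next
  case (Suc n)
  have "pinner \<pi> (kapply (kpow K (Suc n)) f) g = pinner \<pi> f (kapply (kpow K (Suc n)) g)" for f g
  proof -
    have "pinner \<pi> (kapply (kpow K (Suc n)) f) g = pinner \<pi> (kapply (kpow K n) f) (kapply K g)"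
      using assms by (simp add: self_adjoint_def kapply_kmult)
    also have "\<dots> = pinner \<pi> f (kapply (kpow K (Suc n)) g)"
      using Suc.IH unfolding self_adjoint_def kapply_kpow_Suc_right by blast
    finally show ?thesis .
  qed
  then show ?case by (simp add: self_adjoint_def)
qed

lemma preserves_centered_kpow:
  "preserves_centered \<pi> K \<Longrightarrow> preserves_centered \<pi> (kpow K n)"
  by (induction n) (simp_all add: preserves_centered_def kapply_kmult)

lemma self_adjoint_kshift: "self_adjoint \<pi> K \<Longrightarrow> self_adjoint \<pi> (kshift c K)"
  unfolding self_adjoint_def kapply_kshift by (simp add: pinner_linear)

lemma preserves_centered_kshift:
  assumes "preserves_centered \<pi> K"
  shows "preserves_centered \<pi> (kshift c K)"
  unfolding preserves_centered_def kapply_kshift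
proof
  fix f assume "f \<in> centered \<pi>"
  then have "(\<lambda>x. c * f x + (- 1) * kapply K f x) \<in> centered \<pi>"
    using assms centered_lincomb unfolding preserves_centered_def by blast
  then show "(\<lambda>x. c * f x - kapply K f x) \<in> centered \<pi>" by simp
qed

lemma pinner_sandwich:
  "self_adjoint \<pi> Q \<Longrightarrow>
    pinner \<pi> f (kapply (kmult (kmult Q K) Q) g) = pinner \<pi> (kapply Q f) (kapply K (kapply Q g))"
  unfolding self_adjoint_def by (simp add: kapply_kmult)

lemma self_adjoint_sandwich:
  "self_adjoint \<pi> Q \<Longrightarrow> self_adjoint \<pi> K \<Longrightarrow> self_adjoint \<pi> (kmult (kmult Q K) Q)"
  unfolding self_adjoint_def by (simp add: kapply_kmult)

lemma preserves_centered_sandwich: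
  "preserves_centered \<pi> Q \<Longrightarrow> preserves_centered \<pi> K \<Longrightarrow> preserves_centered \<pi> (kmult (kmult Q K) Q)"
  unfolding preserves_centered_def by (simp add: kapply_kmult)

lemma centered_psd_sandwich:
  "self_adjoint \<pi> Q \<Longrightarrow> preserves_centered \<pi> Q \<Longrightarrow> centered_psd \<pi> K \<Longrightarrow> centered_psd \<pi> (kmult (kmult Q K) Q)"
  unfolding centered_psd_def preserves_centered_def by (simp add: pinner_sandwich)

lemma rayleigh_bound_mono:
  "(\<And>x. 0 \<le> \<pi> x) \<Longrightarrow> rayleigh_bound \<pi> K lam \<Longrightarrow> lam \<le> lam' \<Longrightarrow> rayleigh_bound \<pi> K lam'"
  unfolding rayleigh_bound_def by (meson mult_right_mono order_trans pinner_self_nonneg)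

lemma stationary_if_reversible:
  assumes "stochastic K" "reversible \<pi> K"
  shows "(\<Sum>x\<in>UNIV. \<pi> x * K x y) = \<pi> y"
proof -
  have "(\<Sum>x\<in>UNIV. \<pi> x * K x y) = (\<Sum>x\<in>UNIV. \<pi> y * K y x)"
    using assms(2) by (simp add: reversible_def)
  also have "\<dots> = \<pi> y" using assms(1) by (simp add: stochastic_def sum_distrib_left[symmetric])
  finally show ?thesis .
qed

lemma pinner_self_eq_transition_sum:
  assumes "stochastic K" "reversible \<pi> K"
  shows "(\<Sum>x\<in>UNIV. \<Sum>y\<in>UNIV. \<pi> x * K x y * (f y)\<^sup>2) = pinner \<pi> f f"
proof -
  have "(\<Sum>x\<in>UNIV. \<Sum>y\<in>UNIV. \<pi> x * K x y * (f y)\<^sup>2) = (\<Sum>y\<in>UNIV. \<Sum>x\<in>UNIV. \<pi> x * K x y * (f y)\<^sup>2)"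
    by (rule sum.swap)
  also have "\<dots> = (\<Sum>y\<in>UNIV. (\<Sum>x\<in>UNIV. \<pi> x * K x y) * (f y)\<^sup>2)"
    by (simp add: sum_distrib_right)
  also have "\<dots> = pinner \<pi> f f"
    using stationary_if_reversible[OF assms] by (simp add: pinner_def power2_eq_square mult.assoc)
  finally show ?thesis .
qed

lemma pinner_kapply_self_le:
  assumes nonneg: "\<And>x. 0 \<le> \<pi> x" and "stochastic K" "reversible \<pi> K"
  shows "pinner \<pi> (kapply K f) (kapply K f) \<le> pinner \<pi> f f"
proof -
  have jensen: "(kapply K f x)\<^sup>2 \<le> (\<Sum>y\<in>UNIV. K x y * (f y)\<^sup>2)" for x
  proof -
    define m where "m = kapply K f x"
    have "0 \<le> (\<Sum>y\<in>UNIV. K x y * (f y - m)\<^sup>2)"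
      using assms(2) unfolding stochastic_def by (intro sum_nonneg) simp
    also have "\<dots> = (\<Sum>y\<in>UNIV. K x y * (f y)\<^sup>2) - 2 * m * (\<Sum>y\<in>UNIV. K x y * f y) + m\<^sup>2 * (\<Sum>y\<in>UNIV. K x y)"
      by (simp add: power2_eq_square algebra_simps sum.distrib sum_subtractf sum_distrib_left)
    also have "\<dots> = (\<Sum>y\<in>UNIV. K x y * (f y)\<^sup>2) - m\<^sup>2"
      using assms(2) unfolding stochastic_def m_def kapply_def by (simp add: power2_eq_square)
    finally show ?thesis unfolding m_def by simp
  qed
  have "pinner \<pi> (kapply K f) (kapply K f) = (\<Sum>x\<in>UNIV. \<pi> x * (kapply K f x)\<^sup>2)"
    unfolding pinner_def by (simp add: power2_eq_square mult.assoc)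
  also have "\<dots> \<le> (\<Sum>x\<in>UNIV. \<pi> x * (\<Sum>y\<in>UNIV. K x y * (f y)\<^sup>2))"
    using nonneg jensen by (intro sum_mono mult_left_mono) auto
  also have "\<dots> = (\<Sum>x\<in>UNIV. \<Sum>y\<in>UNIV. \<pi> x * K x y * (f y)\<^sup>2)"
    by (simp add: sum_distrib_left mult.assoc)
  also have "\<dots> = pinner \<pi> f f"
    using pinner_self_eq_transition_sum[OF assms(2,3)] .
  finally show ?thesis .
qed

lemma dirichlet_form_eq:
  assumes "stochastic K" "reversible \<pi> K"
  shows "(\<Sum>x\<in>UNIV. \<Sum>y\<in>UNIV. \<pi> x * K x y * (f x - f y)\<^sup>2) = 2 * (pinner \<pi> f f - pinner \<pi> f (kapply K f))"
proof -
  have "\<pi> x * K x y * (f x - f y)\<^sup>2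
      = \<pi> x * (f x)\<^sup>2 * K x y - 2 * (\<pi> x * f x * (K x y * f y)) + \<pi> x * K x y * (f y)\<^sup>2" for x y
    by (simp add: power2_eq_square algebra_simps)
  then have "(\<Sum>x\<in>UNIV. \<Sum>y\<in>UNIV. \<pi> x * K x y * (f x - f y)\<^sup>2)
      = (\<Sum>x\<in>UNIV. \<pi> x * (f x)\<^sup>2 * (\<Sum>y\<in>UNIV. K x y)) - 2 * pinner \<pi> f (kapply K f)
        + (\<Sum>x\<in>UNIV. \<Sum>y\<in>UNIV. \<pi> x * K x y * (f y)\<^sup>2)"
    by (simp add: pinner_def kapply_def sum.distrib sum_subtractf sum_distrib_left)
  also have "\<dots> = 2 * (pinner \<pi> f f - pinner \<pi> f (kapply K f))"
    using assms(1) pinner_self_eq_transition_sum[OF assms]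
    by (simp add: stochastic_def pinner_def power2_eq_square mult.assoc)
  finally show ?thesis .
qed

section \<open>Rayleigh quotients\<close>

lemma quadratic_nonneg_imp_discriminant:
  fixes a b c :: real
  assumes nonneg: "\<And>t. 0 \<le> a + 2 * b * t + c * t\<^sup>2" and "0 \<le> c"
  shows "b\<^sup>2 \<le> a * c"
proof (cases "c = 0")
  case True
  have "b = 0"
  proof (rule ccontr)
    assume "b \<noteq> 0"
    with nonneg[of "- (a + 1) / (2 * b)"] True show False by (simp add: field_simps)
  qed
  with True show ?thesis by simp
next
  case False
  with \<open>0 \<le> c\<close> have "0 < c" by simp
  with nonneg[of "- b / c"] show ?thesis by (simp add: field_simps power2_eq_square)
qed

lemma centered_psd_cauchy_schwarz:
  assumes sa: "self_adjoint \<pi> K" and psd: "centered_psd \<pi> K"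
    and g: "g \<in> centered \<pi>" and h: "h \<in> centered \<pi>"
  shows "(pinner \<pi> g (kapply K h))\<^sup>2 \<le> pinner \<pi> g (kapply K g) * pinner \<pi> h (kapply K h)"
proof (rule quadratic_nonneg_imp_discriminant)
  have sym: "pinner \<pi> h (kapply K g) = pinner \<pi> g (kapply K h)"
    using sa unfolding self_adjoint_def by (metis pinner_commute)
  fix t
  have "(\<lambda>x. 1 * g x + t * h x) \<in> centered \<pi>" using g h by (rule centered_lincomb)
  then have "0 \<le> pinner \<pi> (\<lambda>x. g x + t * h x) (kapply K (\<lambda>x. g x + t * h x))"
    using psd unfolding centered_psd_def by simp
  also have "\<dots> = pinner \<pi> g (kapply K g) + 2 * pinner \<pi> g (kapply K h) * t + pinner \<pi> h (kapply K h) * t\<^sup>2"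
    by (simp add: kapply_add kapply_scale pinner_linear sym algebra_simps power2_eq_square)
  finally show "0 \<le> pinner \<pi> g (kapply K g) + 2 * pinner \<pi> g (kapply K h) * t + pinner \<pi> h (kapply K h) * t\<^sup>2" .
next
  show "0 \<le> pinner \<pi> h (kapply K h)" using psd h unfolding centered_psd_def by blast
qed

lemma pinner_kapply_self_le_rayleigh:
  assumes sa: "self_adjoint \<pi> K" and pr: "preserves_centered \<pi> K" and psd: "centered_psd \<pi> K"
    and bound: "rayleigh_bound \<pi> K lam" and "0 \<le> lam" and h: "h \<in> centered \<pi>"
  shows "pinner \<pi> (kapply K h) (kapply K h) \<le> lam * pinner \<pi> h (kapply K h)"
proof -
  define u where "u = kapply K h"
  have u: "u \<in> centered \<pi>" using pr h unfolding u_def preserves_centered_def by blast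
  have "pinner \<pi> u u = pinner \<pi> u (kapply K h)" unfolding u_def ..
  then have "(pinner \<pi> u u)\<^sup>2 \<le> pinner \<pi> u (kapply K u) * pinner \<pi> h (kapply K h)"
    using centered_psd_cauchy_schwarz[OF sa psd u h] by simp
  also have "\<dots> \<le> lam * pinner \<pi> u u * pinner \<pi> h (kapply K h)"
    using bound u psd h unfolding rayleigh_bound_def centered_psd_def by (simp add: mult_right_mono)
  finally have "pinner \<pi> u u * pinner \<pi> u u \<le> pinner \<pi> u u * (lam * pinner \<pi> h (kapply K h))"
    by (simp add: power2_eq_square algebra_simps)
  moreover have "0 \<le> lam * pinner \<pi> h (kapply K h)"
    using \<open>0 \<le> lam\<close> psd h unfolding centered_psd_def by simp
  ultimately show ?thesis
    unfolding u_def[symmetric] by (cases "pinner \<pi> u u = 0") (auto simp: mult_le_cancel_left)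
qed

lemma rayleigh_bound_iff_unit:
  assumes pos: "\<And>x. 0 < \<pi> x"
  shows "rayleigh_bound \<pi> K lam \<longleftrightarrow> (\<forall>g\<in>unit_centered \<pi>. pinner \<pi> g (kapply K g) \<le> lam)"
proof
  assume "rayleigh_bound \<pi> K lam"
  then show "\<forall>g\<in>unit_centered \<pi>. pinner \<pi> g (kapply K g) \<le> lam"
    unfolding rayleigh_bound_def unit_centered_def by auto
next
  assume unit: "\<forall>g\<in>unit_centered \<pi>. pinner \<pi> g (kapply K g) \<le> lam"
  show "rayleigh_bound \<pi> K lam"
    unfolding rayleigh_bound_def
  proof
    fix g assume g: "g \<in> centered \<pi>"
    show "pinner \<pi> g (kapply K g) \<le> lam * pinner \<pi> g g"
    proof (cases "g = (\<lambda>_. 0)")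
      case True
      then show ?thesis by (simp add: kapply_def)
    next
      case False
      define s where "s = sqrt (pinner \<pi> g g)"
      have g_pos: "0 < pinner \<pi> g g"
        using False pinner_self_nonneg[of \<pi> g] pinner_self_eq_0_iff[of \<pi>, OF pos] pos less_imp_le
        by (metis order_le_less)
      then have s: "0 < s" "s * s = pinner \<pi> g g" unfolding s_def by simp_all
      define h where "h = (\<lambda>x. (1 / s) * g x)"
      have h_pinner: "pinner \<pi> h h = pinner \<pi> g g / (s * s)"
          "pinner \<pi> h (kapply K h) = pinner \<pi> g (kapply K g) / (s * s)"
        unfolding h_def by (simp_all only: kapply_scale pinner_scale_left pinner_scale_right) simp_all
      have "h \<in> centered \<pi>" unfolding h_def using centered_lincomb[OF g g, of "1 / s" 0] by simp
      with s g_pos h_pinner have "h \<in> unit_centered \<pi>" by (simp add: unit_centered_def)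
      with unit h_pinner have "pinner \<pi> g (kapply K g) / (s * s) \<le> lam" by metis
      with g_pos s(2) show ?thesis by (simp add: pos_divide_le_eq)
    qed
  qed
qed

lemma rayleigh_quotient_attains_max:
  fixes K :: "'a::finite \<Rightarrow> 'a \<Rightarrow> real"
  assumes pos: "\<And>x. 0 < \<pi> x" and ne: "unit_centered \<pi> \<noteq> {}"
  obtains f where "f \<in> unit_centered \<pi>"
    and "\<And>g. g \<in> unit_centered \<pi> \<Longrightarrow> pinner \<pi> g (kapply K g) \<le> pinner \<pi> f (kapply K f)"
proof -
  define V where "V = {v::real^'a. (\<lambda>x. v$x) \<in> unit_centered \<pi>}"
  have "V = {v. (\<Sum>x\<in>UNIV. v$x * \<pi> x) = 0} \<inter> {v. (\<Sum>x\<in>UNIV. \<pi> x * v$x * v$x) = 1}"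
    unfolding V_def unit_centered_def centered_def pinner_def by auto
  moreover have "closed {v::real^'a. (\<Sum>x\<in>UNIV. v$x * \<pi> x) = 0}"
    by (intro closed_Collect_eq continuous_intros)
  moreover have "closed {v::real^'a. (\<Sum>x\<in>UNIV. \<pi> x * v$x * v$x) = 1}"
    by (intro closed_Collect_eq continuous_intros)
  ultimately have "closed V" by (simp add: closed_Int)
  moreover have "bounded V"
    unfolding bounded_iff
  proof (intro exI ballI)
    fix v assume "v \<in> V"
    then have one: "(\<Sum>x\<in>UNIV. \<pi> x * v$x * v$x) = 1"
      unfolding V_def unit_centered_def pinner_def by simp
    have "\<bar>v$x\<bar> \<le> sqrt (1 / \<pi> x)" for x
    proof -
      have "\<pi> x * v$x * v$x \<le> (\<Sum>x\<in>UNIV. \<pi> x * v$x * v$x)"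
        using pos by (intro member_le_sum) (auto simp: less_imp_le mult.assoc)
      with one pos[of x] have "(v$x)\<^sup>2 \<le> 1 / \<pi> x"
        by (simp add: field_simps power2_eq_square)
      then show ?thesis by (metis real_sqrt_abs real_sqrt_le_mono)
    qed
    then have "(\<Sum>x\<in>UNIV. \<bar>v$x\<bar>) \<le> (\<Sum>x\<in>UNIV. sqrt (1 / \<pi> x))" by (rule sum_mono)
    with norm_le_l1_cart[of v] show "norm v \<le> (\<Sum>x\<in>UNIV. sqrt (1 / \<pi> x))" by linarith
  qed
  ultimately have "compact V" by (simp add: compact_eq_bounded_closed)
  obtain f where "f \<in> unit_centered \<pi>" using ne by blast
  then have "(\<chi> x. f x) \<in> V" by (simp add: V_def vec_lambda_inverse)
  then have "V \<noteq> {}" by blast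
  have "continuous_on UNIV (\<lambda>v::real^'a. pinner \<pi> (\<lambda>x. v$x) (kapply K (\<lambda>x. v$x)))"
    unfolding pinner_def kapply_def by (intro continuous_intros)
  then have "continuous_on V (\<lambda>v. pinner \<pi> (\<lambda>x. v$x) (kapply K (\<lambda>x. v$x)))"
    by (rule continuous_on_subset) simp
  then obtain v0 where "v0 \<in> V" and max: "\<And>v. v \<in> V \<Longrightarrow>
      pinner \<pi> (\<lambda>x. v$x) (kapply K (\<lambda>x. v$x)) \<le> pinner \<pi> (\<lambda>x. v0$x) (kapply K (\<lambda>x. v0$x))"
    using continuous_attains_sup[OF \<open>compact V\<close> \<open>V \<noteq> {}\<close>] by blast
  show ?thesis
  proof
    show "(\<lambda>x. v0$x) \<in> unit_centered \<pi>" using \<open>v0 \<in> V\<close> unfolding V_def by simp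
    fix g assume "g \<in> unit_centered \<pi>"
    then show "pinner \<pi> g (kapply K g) \<le> pinner \<pi> (\<lambda>x. v0$x) (kapply K (\<lambda>x. v0$x))"
      using max[of "\<chi> x. g x"] by (simp add: V_def vec_lambda_inverse)
  qed
qed

lemma top_eigenvector_exists:
  assumes pos: "\<And>x. 0 < \<pi> x" and sa: "self_adjoint \<pi> K" and pr: "preserves_centered \<pi> K"
    and ne: "unit_centered \<pi> \<noteq> {}"
  obtains f lam where "f \<in> unit_centered \<pi>" "kapply K f = (\<lambda>x. lam * f x)" "rayleigh_bound \<pi> K lam"
proof -
  obtain f where f: "f \<in> unit_centered \<pi>"
    and max: "\<And>g. g \<in> unit_centered \<pi> \<Longrightarrow> pinner \<pi> g (kapply K g) \<le> pinner \<pi> f (kapply K f)"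
    using rayleigh_quotient_attains_max[OF pos ne] by blast
  define lam where "lam = pinner \<pi> f (kapply K f)"
  have bound: "rayleigh_bound \<pi> K lam"
    unfolding rayleigh_bound_iff_unit[OF pos] lam_def using max by blast
  \<comment> \<open>\<open>lam I - K\<close> is positive semidefinite and its quadratic form vanishes at \<open>f\<close>, so by
    Cauchy-Schwarz \<open>(lam I - K) f\<close> is orthogonal to itself.\<close>
  define S where "S = kshift lam K"
  define r where "r = kapply S f"
  have f_centered: "f \<in> centered \<pi>" and f_unit: "pinner \<pi> f f = 1"
    using f by (auto simp: unit_centered_def)
  have sa_S: "self_adjoint \<pi> S" unfolding S_def using sa by (rule self_adjoint_kshift)
  have psd_S: "centered_psd \<pi> S"
    using bound unfolding centered_psd_def rayleigh_bound_def S_def kapply_kshift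
    by (simp add: pinner_linear)
  have r_centered: "r \<in> centered \<pi>"
    using preserves_centered_kshift[OF pr] f_centered unfolding r_def S_def preserves_centered_def by blast
  have "pinner \<pi> f (kapply S f) = 0"
    unfolding S_def kapply_kshift by (simp add: pinner_linear f_unit lam_def)
  then have "(pinner \<pi> r r)\<^sup>2 \<le> 0"
    using centered_psd_cauchy_schwarz[OF sa_S psd_S r_centered f_centered] unfolding r_def by simp
  then have "r = (\<lambda>_. 0)" using pinner_self_eq_0_iff[of \<pi>, OF pos] by simp
  then have "kapply K f = (\<lambda>x. lam * f x)"
    unfolding r_def S_def kapply_kshift by (simp add: fun_eq_iff)
  with that f bound show ?thesis by blast
qed

lemma centered_psd_if_eigenvalues_nonneg:
  assumes pos: "\<And>x. 0 < \<pi> x" and sa: "self_adjoint \<pi> K" and pr: "preserves_centered \<pi> K"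
    and eig: "\<And>mu. kernel_eigenvalue K (complex_of_real mu) \<Longrightarrow> 0 \<le> mu"
  shows "centered_psd \<pi> K"
proof -
  \<comment> \<open>A top eigenvector of \<open>kshift 0 K = - K\<close> is a bottom eigenvector of \<open>K\<close>.\<close>
  have "pinner \<pi> g (kapply (kshift 0 K) g) \<le> 0" if g: "g \<in> unit_centered \<pi>" for g
  proof -
    obtain f mu where f: "f \<in> unit_centered \<pi>" and eigvec: "kapply (kshift 0 K) f = (\<lambda>x. mu * f x)"
      and bound: "rayleigh_bound \<pi> (kshift 0 K) mu"
      using top_eigenvector_exists[OF pos self_adjoint_kshift[OF sa] preserves_centered_kshift[OF pr]] g
      by blast
    have f_nonzero: "f \<noteq> (\<lambda>_. 0)" using f by (auto simp: unit_centered_def)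
    have Kf: "kapply K f x = - mu * f x" for x
      using fun_cong[OF eigvec, of x] by (simp add: kapply_kshift)
    have "kernel_eigenvalue K (complex_of_real (- mu))"
      unfolding kernel_eigenvalue_def
    proof (intro exI conjI allI)
      show "(\<lambda>x. complex_of_real (f x)) \<noteq> (\<lambda>_. 0)" using f_nonzero by (auto simp: fun_eq_iff)
      fix x
      have "complex_of_real (kapply K f x) = complex_of_real (- mu) * complex_of_real (f x)"
        by (simp add: Kf)
      then show "(\<Sum>y\<in>UNIV. complex_of_real (K x y) * complex_of_real (f y))
          = complex_of_real (- mu) * complex_of_real (f x)" by (simp add: kapply_def)
    qed
    then have "mu \<le> 0" using eig by fastforce
    with bound g show ?thesis unfolding rayleigh_bound_iff_unit[OF pos] by fastforce
  qed
  then have "rayleigh_bound \<pi> (kshift 0 K) 0" by (simp add: rayleigh_bound_iff_unit[OF pos])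
  then show ?thesis
    unfolding rayleigh_bound_def centered_psd_def kapply_kshift by (simp add: pinner_linear)
qed

section \<open>The spectral gap of an irreducible kernel\<close>

lemma kpow_pos_imp_eq:
  assumes nonneg: "\<And>x y. 0 \<le> K x y" and step: "\<And>x y. 0 < K x y \<Longrightarrow> f x = f y"
  shows "0 < kpow K n x y \<Longrightarrow> f x = f y"
proof (induction n arbitrary: x)
  case 0
  then show ?case by (simp add: kid_def split: if_splits)
next
  case (Suc n)
  then have "0 < (\<Sum>z\<in>UNIV. K x z * kpow K n z y)" by (simp add: kmult_def)
  then obtain z where "0 < K x z * kpow K n z y"
    by (metis (no_types, lifting) not_le sum_nonpos)
  with nonneg[of x z] have "0 < K x z" "0 < kpow K n z y"
    by (auto simp: zero_less_mult_iff)
  then have "f x = f z" "f z = f y" using step Suc.IH by simp_all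
  then show ?case by simp
qed

lemma harmonic_imp_constant:
  assumes pos: "\<And>x. 0 < \<pi> x" and st: "stochastic K" and rev: "reversible \<pi> K"
    and irr: "irreducible_kernel K" and harmonic: "kapply K f = f"
  shows "f x = f y"
proof -
  have nonneg: "\<And>x y. 0 \<le> \<pi> x * K x y * (f x - f y)\<^sup>2"
    using pos st by (simp add: stochastic_def less_imp_le)
  have "(\<Sum>x\<in>UNIV. \<Sum>y\<in>UNIV. \<pi> x * K x y * (f x - f y)\<^sup>2) = 0"
    using dirichlet_form_eq[OF st rev, of f] harmonic by simp
  then have edge: "0 < K x y \<Longrightarrow> f x = f y" for x y
    using nonneg pos[of x] by (auto simp: sum_nonneg_eq_0_iff sum_nonneg) (metis less_irrefl)
  obtain n where "0 < kpow K n x y"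
    using irr by (auto simp: irreducible_kernel_def)
  then show ?thesis
    using kpow_pos_imp_eq[of K f, OF _ edge] st by (simp add: stochastic_def)
qed

lemma centered_eigenvalue_lt_1:
  assumes pos: "\<And>x. 0 < \<pi> x" and st: "stochastic K" and rev: "reversible \<pi> K"
    and irr: "irreducible_kernel K"
    and f: "f \<in> unit_centered \<pi>" and eigvec: "kapply K f = (\<lambda>x. lam * f x)"
  shows "lam < 1"
proof -
  have f_unit: "pinner \<pi> f f = 1" and f_centered: "(\<Sum>x\<in>UNIV. f x * \<pi> x) = 0"
    using f by (auto simp: unit_centered_def centered_def)
  have "lam\<^sup>2 = pinner \<pi> (kapply K f) (kapply K f)"
    by (simp add: eigvec pinner_linear f_unit power2_eq_square)
  also have "\<dots> \<le> 1"
    using pinner_kapply_self_le[OF less_imp_le[OF pos] st rev, of f] f_unit by simp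
  finally have "lam \<le> 1" using power2_le_imp_le[of lam 1] by simp
  moreover have "lam \<noteq> 1"
  proof
    assume "lam = 1"
    then have "kapply K f = f" using eigvec by simp
    then have const: "f x = f y" for x y using harmonic_imp_constant[OF pos st rev irr] by blast
    have "f x * (\<Sum>y\<in>UNIV. \<pi> y) = (\<Sum>y\<in>UNIV. f y * \<pi> y)" for x
      unfolding sum_distrib_left by (intro sum.cong refl) (metis const)
    moreover have "0 < (\<Sum>y\<in>UNIV. \<pi> y)" using pos by (simp add: sum_pos)
    ultimately have "f = (\<lambda>_. 0)" using f_centered by (auto simp: fun_eq_iff)
    with f_unit show False by simp
  qed
  ultimately show ?thesis by simp
qed

lemma rayleigh_bound_lt_1_if_irreducible:
  assumes pos: "\<And>x. 0 < \<pi> x" and st: "stochastic K" and rev: "reversible \<pi> K"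
    and irr: "irreducible_kernel K"
  obtains lam where "rayleigh_bound \<pi> K lam" "lam < 1"
proof (cases "unit_centered \<pi> = {}")
  case True
  then have "rayleigh_bound \<pi> K 0" by (simp add: rayleigh_bound_iff_unit[OF pos])
  then show ?thesis by (rule that) simp
next
  case False
  have sa: "self_adjoint \<pi> K" using rev by (rule self_adjoint_if_reversible)
  obtain f lam where "f \<in> unit_centered \<pi>" "kapply K f = (\<lambda>x. lam * f x)" "rayleigh_bound \<pi> K lam"
    using top_eigenvector_exists[OF pos sa preserves_centered_if_stochastic[OF sa st] False] by blast
  with centered_eigenvalue_lt_1[OF pos st rev irr] that show ?thesis by blast
qed

section \<open>Autocovariances and the asymptotic variance\<close>

definition autocov :: "('a::finite \<Rightarrow> real) \<Rightarrow> ('a \<Rightarrow> 'a \<Rightarrow> real) \<Rightarrow> ('a \<Rightarrow> real) \<Rightarrow> nat \<Rightarrow> real" where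
  "autocov \<pi> K f k = pinner \<pi> f (kapply (kpow K k) f)"

lemma autocov_add:
  "self_adjoint \<pi> K \<Longrightarrow> autocov \<pi> K f (m + n) = pinner \<pi> (kapply (kpow K m) f) (kapply (kpow K n) f)"
  unfolding autocov_def kapply_kpow_add using self_adjoint_kpow unfolding self_adjoint_def by metis

lemma double_sum_abs_diff:
  fixes c :: "nat \<Rightarrow> real"
  shows "(\<Sum>i\<in>{1..n}. \<Sum>j\<in>{1..n}. c (nat \<bar>int i - int j\<bar>)) = (\<Sum>m<n. c 0 + 2 * (\<Sum>k\<in>{1..m}. c k))"
proof (induction n)
  case 0
  then show ?case by simp
next
  case (Suc n)
  have reflect: "nat (1 + int n - int j) = Suc n - j" if "j \<le> n" for j
  proof -
    have "int (Suc n - j) = 1 + int n - int j" using that by (simp add: of_nat_diff)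
    then show ?thesis by (metis nat_int)
  qed
  have last_row: "(\<Sum>j\<in>{1..n}. c (nat \<bar>int (Suc n) - int j\<bar>)) = (\<Sum>k\<in>{1..n}. c k)"
    by (rule sum.reindex_bij_witness[of _ "\<lambda>k. Suc n - k" "\<lambda>j. Suc n - j"]) (auto simp: reflect)
  then have last_col: "(\<Sum>i\<in>{1..n}. c (nat \<bar>int i - int (Suc n)\<bar>)) = (\<Sum>k\<in>{1..n}. c k)"
    by (simp add: abs_minus_commute)
  have "{1..Suc n} = insert (Suc n) {1..n}" by auto
  then have "(\<Sum>i\<in>{1..Suc n}. \<Sum>j\<in>{1..Suc n}. c (nat \<bar>int i - int j\<bar>))
      = c 0 + (\<Sum>j\<in>{1..n}. c (nat \<bar>int (Suc n) - int j\<bar>)) + (\<Sum>i\<in>{1..n}. c (nat \<bar>int i - int (Suc n)\<bar>))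
        + (\<Sum>i\<in>{1..n}. \<Sum>j\<in>{1..n}. c (nat \<bar>int i - int j\<bar>))"
    by (simp add: sum.distrib)
  then show ?case using Suc.IH last_row last_col by simp
qed

lemma cesaro_mean_zero:
  fixes D :: "nat \<Rightarrow> real"
  assumes "D \<longlonglongrightarrow> 0"
  shows "(\<lambda>n. (\<Sum>m<n. D m) / real n) \<longlonglongrightarrow> 0"
proof (rule LIMSEQ_I)
  fix e :: real assume "0 < e"
  then obtain N where N: "\<And>m. N \<le> m \<Longrightarrow> \<bar>D m\<bar> < e / 2"
    using LIMSEQ_D[OF assms, of "e / 2"] by auto
  define A where "A = (\<Sum>m<N. \<bar>D m\<bar>)"
  obtain M :: nat where M: "2 * A / e < real M" using reals_Archimedean2 by blast
  have "norm ((\<Sum>m<n. D m) / real n - 0) < e" if n: "max (Suc N) M \<le> n" for n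
  proof -
    have "2 * A < real M * e" using M \<open>0 < e\<close> by (simp add: divide_less_eq)
    also have "\<dots> \<le> real n * e" using n \<open>0 < e\<close> by (intro mult_right_mono) auto
    finally have head: "A < real n * (e / 2)" by simp
    have "(\<Sum>m\<in>{N..<n}. \<bar>D m\<bar>) \<le> (\<Sum>m\<in>{N..<n}. e / 2)"
      using N by (intro sum_mono) (simp add: less_imp_le)
    also have "\<dots> \<le> real n * (e / 2)" using \<open>0 < e\<close> by simp
    finally have tail: "(\<Sum>m\<in>{N..<n}. \<bar>D m\<bar>) \<le> real n * (e / 2)" .
    have "\<bar>\<Sum>m<n. D m\<bar> \<le> (\<Sum>m<n. \<bar>D m\<bar>)" by (rule sum_abs)
    also have "\<dots> = A + (\<Sum>m\<in>{N..<n}. \<bar>D m\<bar>)"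
      using n unfolding A_def by (simp add: lessThan_atLeast0 sum.atLeastLessThan_concat)
    finally have "\<bar>\<Sum>m<n. D m\<bar> < real n * e" using head tail by linarith
    with n show ?thesis by (simp add: divide_less_eq mult.commute)
  qed
  then show "\<exists>n0. \<forall>n\<ge>n0. norm ((\<Sum>m<n. D m) / real n - 0) < e" by blast
qed

lemma cesaro_mean:
  fixes T :: "nat \<Rightarrow> real"
  assumes "T \<longlonglongrightarrow> L"
  shows "(\<lambda>n. (\<Sum>m<n. T m) / real n) \<longlonglongrightarrow> L"
proof -
  define D where "D m = T m - L" for m
  have "D \<longlonglongrightarrow> 0" unfolding D_def using assms by (simp add: LIM_zero)
  then have "(\<lambda>n. (\<Sum>m<n. D m) / real n + L) \<longlonglongrightarrow> L"
    using tendsto_add[OF cesaro_mean_zero tendsto_const, of D L] by simp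
  moreover have "eventually (\<lambda>n. (\<Sum>m<n. D m) / real n + L = (\<Sum>m<n. T m) / real n) sequentially"
    unfolding eventually_sequentially D_def
    by (intro exI[of _ 1] allI impI) (simp add: sum_subtractf field_simps)
  ultimately show ?thesis by (rule Lim_transform_eventually)
qed

lemma asym_var_eq_autocov_series:
  assumes f: "f \<in> centered \<pi>" and summable: "summable (\<lambda>k. autocov \<pi> K f (Suc k))"
  shows "asym_var \<pi> K f = ereal (autocov \<pi> K f 0 + 2 * (\<Sum>k. autocov \<pi> K f (Suc k)))"
proof -
  define c where "c = autocov \<pi> K f"
  define T where "T m = c 0 + 2 * (\<Sum>k<m. c (Suc k))" for m
  have "(\<Sum>x\<in>UNIV. \<pi> x * f x) = 0" using f by (simp add: centered_def mult.commute)
  then have "partial_sum_variance \<pi> K f n = (\<Sum>i\<in>{1..n}. \<Sum>j\<in>{1..n}. c (nat \<bar>int i - int j\<bar>))" for n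
    unfolding partial_sum_variance_def c_def autocov_def pinner_def by simp
  then have psv: "partial_sum_variance \<pi> K f n = (\<Sum>m<n. T m)" for n
    unfolding double_sum_abs_diff T_def by (simp add: sum.atLeast1_atMost_eq)
  have "T \<longlonglongrightarrow> c 0 + 2 * (\<Sum>k. c (Suc k))"
    unfolding T_def using summable
    by (intro tendsto_add tendsto_const tendsto_mult summable_LIMSEQ) (simp add: c_def)
  then have "(\<lambda>n. partial_sum_variance \<pi> K f n / real n) \<longlonglongrightarrow> c 0 + 2 * (\<Sum>k. c (Suc k))"
    unfolding psv by (rule cesaro_mean)
  then show ?thesis
    unfolding asym_var_def c_def by (intro limI) (simp add: lim_ereal)
qed

lemma autocov_Suc_le:
  assumes nonneg: "\<And>x. 0 \<le> \<pi> x" and sa: "self_adjoint \<pi> K" and pr: "preserves_centered \<pi> K"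
    and psd: "centered_psd \<pi> K" and bound: "rayleigh_bound \<pi> K lam" and "0 \<le> lam"
    and f: "f \<in> centered \<pi>"
  shows "0 \<le> autocov \<pi> K f k \<and> autocov \<pi> K f (Suc k) \<le> lam * autocov \<pi> K f k"
proof -
  obtain m where k: "k = m + m \<or> k = Suc (m + m)" by (metis oddE evenE mult_2 Suc_eq_plus1)
  define h where "h = kapply (kpow K m) f"
  have h: "h \<in> centered \<pi>" using preserves_centered_kpow[OF pr] f unfolding h_def preserves_centered_def by blast
  have Kh: "kapply (kpow K (Suc m)) f = kapply K h" by (simp add: h_def kapply_kmult)
  have even: "autocov \<pi> K f (m + m) = pinner \<pi> h h"
    using autocov_add[OF sa, of f m m] by (simp add: h_def)
  have odd: "autocov \<pi> K f (Suc (m + m)) = pinner \<pi> h (kapply K h)"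
    using autocov_add[OF sa, of f m "Suc m", unfolded Kh] by (simp add: h_def)
  have next_even: "autocov \<pi> K f (Suc (Suc (m + m))) = pinner \<pi> (kapply K h) (kapply K h)"
    using autocov_add[OF sa, of f "Suc m" "Suc m", unfolded Kh] by simp
  from k show ?thesis
  proof
    assume "k = m + m"
    then show ?thesis
      using even odd pinner_self_nonneg[OF nonneg] bound h unfolding rayleigh_bound_def by auto
  next
    assume "k = Suc (m + m)"
    then show ?thesis
      using odd next_even psd h pinner_kapply_self_le_rayleigh[OF sa pr psd bound \<open>0 \<le> lam\<close> h]
      unfolding centered_psd_def by simp
  qed
qed

lemma autocov_decay:
  assumes "\<And>x. 0 \<le> \<pi> x" "self_adjoint \<pi> K" "preserves_centered \<pi> K" "centered_psd \<pi> K"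
    and "rayleigh_bound \<pi> K lam" "0 \<le> lam" "f \<in> centered \<pi>"
  shows "0 \<le> autocov \<pi> K f k \<and> autocov \<pi> K f k \<le> lam ^ k * pinner \<pi> f f"
proof (induction k)
  case 0
  then show ?case using autocov_Suc_le[OF assms, of 0] by (simp add: autocov_def)
next
  case (Suc k)
  have "lam * autocov \<pi> K f k \<le> lam * (lam ^ k * pinner \<pi> f f)"
    using Suc.IH \<open>0 \<le> lam\<close> by (intro mult_left_mono) auto
  with autocov_Suc_le[OF assms, of k] autocov_Suc_le[OF assms, of "Suc k"] show ?case by simp
qed

lemma power_Suc_sums: "\<bar>x::real\<bar> < 1 \<Longrightarrow> (\<lambda>k. x ^ Suc k) sums (x / (1 - x))"
  using sums_mult[OF geometric_sums, of x x] by simp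

lemma worst_asym_var_le:
  assumes pos: "\<And>x. 0 < \<pi> x" and sa: "self_adjoint \<pi> K" and pr: "preserves_centered \<pi> K"
    and psd: "centered_psd \<pi> K" and bound: "rayleigh_bound \<pi> K lam" and lam: "0 \<le> lam" "lam < 1"
  shows "worst_asym_var \<pi> K \<le> ereal ((1 + lam) / (1 - lam))"
  unfolding worst_asym_var_unit_centered
proof (rule SUP_least)
  fix f assume "f \<in> unit_centered \<pi>"
  then have f: "f \<in> centered \<pi>" and f_unit: "pinner \<pi> f f = 1" by (auto simp: unit_centered_def)
  have decay: "0 \<le> autocov \<pi> K f k \<and> autocov \<pi> K f k \<le> lam ^ k" for k
    using autocov_decay[OF less_imp_le[OF pos] sa pr psd bound lam(1) f, of k] by (simp add: f_unit)
  have geom: "(\<lambda>k. lam ^ Suc k) sums (lam / (1 - lam))" using lam by (intro power_Suc_sums) simp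
  have le: "norm (autocov \<pi> K f (Suc k)) \<le> lam ^ Suc k" for k
    using decay[of "Suc k"] by simp
  have summable: "summable (\<lambda>k. autocov \<pi> K f (Suc k))"
    using le by (intro summable_comparison_test'[OF sums_summable[OF geom], of 0]) blast
  have "(\<Sum>k. autocov \<pi> K f (Suc k)) \<le> (\<Sum>k. lam ^ Suc k)"
    using le by (intro suminf_le summable sums_summable[OF geom]) (simp add: abs_le_iff)
  also have "\<dots> = lam / (1 - lam)" using geom by (rule sums_unique[symmetric])
  finally have "(\<Sum>k. autocov \<pi> K f (Suc k)) \<le> lam / (1 - lam)" .
  moreover have "autocov \<pi> K f 0 = 1" by (simp add: autocov_def f_unit)
  ultimately have "autocov \<pi> K f 0 + 2 * (\<Sum>k. autocov \<pi> K f (Suc k)) \<le> (1 + lam) / (1 - lam)"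
    using lam by (simp add: field_simps)
  then show "asym_var \<pi> K f \<le> ereal ((1 + lam) / (1 - lam))"
    by (simp add: asym_var_eq_autocov_series[OF f summable])
qed

lemma worst_asym_var_ge:
  assumes f: "f \<in> unit_centered \<pi>" and eigvec: "kapply K f = (\<lambda>x. lam * f x)"
    and lam: "0 \<le> lam" "lam < 1"
  shows "ereal ((1 + lam) / (1 - lam)) \<le> worst_asym_var \<pi> K"
proof -
  have f_centered: "f \<in> centered \<pi>" and f_unit: "pinner \<pi> f f = 1"
    using f by (auto simp: unit_centered_def)
  have "kapply (kpow K k) f = (\<lambda>x. lam ^ k * f x)" for k
  proof (induction k)
    case (Suc k)
    have "kapply (kpow K (Suc k)) f = (\<lambda>x. lam ^ k * (lam * f x))"
      by (simp only: kpow.simps kapply_kmult Suc.IH kapply_scale eigvec)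
    then show ?case by (simp add: mult_ac)
  qed simp
  then have autocov: "autocov \<pi> K f k = lam ^ k" for k
    by (simp add: autocov_def pinner_scale_right f_unit)
  have geom: "(\<lambda>k. lam ^ Suc k) sums (lam / (1 - lam))" using lam by (intro power_Suc_sums) simp
  have "summable (\<lambda>k. autocov \<pi> K f (Suc k))"
    using sums_summable[OF geom] by (simp add: autocov)
  then have "asym_var \<pi> K f = ereal (autocov \<pi> K f 0 + 2 * (\<Sum>k. autocov \<pi> K f (Suc k)))"
    by (rule asym_var_eq_autocov_series[OF f_centered])
  also have "\<dots> = ereal ((1 + lam) / (1 - lam))"
    using sums_unique[OF geom, symmetric] lam by (simp add: autocov) (simp add: field_simps)
  finally have "asym_var \<pi> K f = ereal ((1 + lam) / (1 - lam))" .
  moreover have "asym_var \<pi> K f \<le> worst_asym_var \<pi> K"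
    unfolding worst_asym_var_unit_centered using f by (rule SUP_upper)
  ultimately show ?thesis by simp
qed

lemma worst_asym_var_mono:
  assumes pos: "\<And>x. 0 < \<pi> x"
    and K: "self_adjoint \<pi> K" "preserves_centered \<pi> K" "centered_psd \<pi> K"
    and K': "self_adjoint \<pi> K'" "preserves_centered \<pi> K'" "centered_psd \<pi> K'"
    and bound': "rayleigh_bound \<pi> K' lam'" "lam' < 1"
    and dominated: "\<And>lam. 0 \<le> lam \<Longrightarrow> rayleigh_bound \<pi> K' lam \<Longrightarrow> rayleigh_bound \<pi> K lam"
  shows "worst_asym_var \<pi> K \<le> worst_asym_var \<pi> K'"
proof (cases "unit_centered \<pi> = {}")
  case True
  then show ?thesis by (simp add: worst_asym_var_unit_centered)
next
  case False
  obtain f lam where f: "f \<in> unit_centered \<pi>" and eigvec: "kapply K' f = (\<lambda>x. lam * f x)"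
    and bound: "rayleigh_bound \<pi> K' lam"
    using top_eigenvector_exists[OF pos K'(1,2) False] by blast
  have f_centered: "f \<in> centered \<pi>" and f_unit: "pinner \<pi> f f = 1"
    using f by (auto simp: unit_centered_def)
  have lam_eq: "lam = pinner \<pi> f (kapply K' f)" by (simp add: eigvec pinner_scale_right f_unit)
  have "0 \<le> lam" using K'(3) f_centered unfolding lam_eq centered_psd_def by blast
  moreover have "lam < 1"
    using bound' f_centered f_unit unfolding lam_eq rayleigh_bound_def by fastforce
  ultimately have "worst_asym_var \<pi> K \<le> ereal ((1 + lam) / (1 - lam))"
    using worst_asym_var_le[OF pos K dominated[OF _ bound]] by blast
  also have "\<dots> \<le> worst_asym_var \<pi> K'"
    using worst_asym_var_ge[OF f eigvec] \<open>0 \<le> lam\<close> \<open>lam < 1\<close> by blast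
  finally show ?thesis .
qed

section \<open>Comparison of sandwiched kernels\<close>

lemma rayleigh_bound_sandwich:
  assumes nonneg: "\<And>x. 0 \<le> \<pi> x" and st: "stochastic Q" and rev: "reversible \<pi> Q"
    and bound: "rayleigh_bound \<pi> K lam" and "0 \<le> lam"
  shows "rayleigh_bound \<pi> (kmult (kmult Q K) Q) lam"
  unfolding rayleigh_bound_def
proof
  have sa: "self_adjoint \<pi> Q" using rev by (rule self_adjoint_if_reversible)
  fix g assume "g \<in> centered \<pi>"
  then have "kapply Q g \<in> centered \<pi>"
    using preserves_centered_if_stochastic[OF sa st] unfolding preserves_centered_def by blast
  then have "pinner \<pi> g (kapply (kmult (kmult Q K) Q) g) \<le> lam * pinner \<pi> (kapply Q g) (kapply Q g)"
    using bound unfolding pinner_sandwich[OF sa] rayleigh_bound_def by blast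
  also have "\<dots> \<le> lam * pinner \<pi> g g"
    using pinner_kapply_self_le[OF nonneg st rev] \<open>0 \<le> lam\<close> by (rule mult_left_mono)
  finally show "pinner \<pi> g (kapply (kmult (kmult Q K) Q) g) \<le> lam * pinner \<pi> g g" .
qed

lemma sandwich_comparison:
  assumes pos: "\<And>x. 0 < \<pi> x"
    and P: "stochastic P" "reversible \<pi> P" "centered_psd \<pi> P" "rayleigh_bound \<pi> P lam" "lam < 1"
    and \<Gamma>: "stochastic \<Gamma>" "reversible \<pi> \<Gamma>"
    and Q: "stochastic Q" "reversible \<pi> Q"
    and fixes_range: "\<And>f. kapply Q (kapply \<Gamma> f) = kapply \<Gamma> f"
  shows "worst_asym_var \<pi> (kmult (kmult \<Gamma> P) \<Gamma>) \<le> worst_asym_var \<pi> (kmult (kmult Q P) Q)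
    \<and> worst_asym_var \<pi> (kmult (kmult Q P) Q) \<le> worst_asym_var \<pi> P"
proof -
  have nonneg: "\<And>x. 0 \<le> \<pi> x" using pos less_imp_le by blast
  have sa: "self_adjoint \<pi> P" "self_adjoint \<pi> \<Gamma>" "self_adjoint \<pi> Q"
    using P(2) \<Gamma>(2) Q(2) by (simp_all add: self_adjoint_if_reversible)
  have pr: "preserves_centered \<pi> P" "preserves_centered \<pi> \<Gamma>" "preserves_centered \<pi> Q"
    using sa P(1) \<Gamma>(1) Q(1) by (simp_all add: preserves_centered_if_stochastic)
  let ?QPQ = "kmult (kmult Q P) Q" and ?\<Gamma>P\<Gamma> = "kmult (kmult \<Gamma> P) \<Gamma>"
  have QPQ: "self_adjoint \<pi> ?QPQ" "preserves_centered \<pi> ?QPQ" "centered_psd \<pi> ?QPQ"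
    using sa pr P(3) by (simp_all add: self_adjoint_sandwich preserves_centered_sandwich centered_psd_sandwich)
  have \<Gamma>P\<Gamma>: "self_adjoint \<pi> ?\<Gamma>P\<Gamma>" "preserves_centered \<pi> ?\<Gamma>P\<Gamma>" "centered_psd \<pi> ?\<Gamma>P\<Gamma>"
    using sa pr P(3) by (simp_all add: self_adjoint_sandwich preserves_centered_sandwich centered_psd_sandwich)
  have QPQ_bound: "rayleigh_bound \<pi> ?QPQ l" if "0 \<le> l" "rayleigh_bound \<pi> P l" for l
    using rayleigh_bound_sandwich[OF nonneg Q that(2,1)] .
  have "worst_asym_var \<pi> ?QPQ \<le> worst_asym_var \<pi> P"
    by (rule worst_asym_var_mono[OF pos QPQ sa(1) pr(1) P(3) P(4,5) QPQ_bound])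
  have "pinner \<pi> g (kapply ?\<Gamma>P\<Gamma> g) = pinner \<pi> g (kapply (kmult (kmult \<Gamma> ?QPQ) \<Gamma>) g)" for g
    using fixes_range by (simp add: pinner_sandwich sa)
  then have \<Gamma>P\<Gamma>_bound: "rayleigh_bound \<pi> ?\<Gamma>P\<Gamma> l" if "0 \<le> l" "rayleigh_bound \<pi> ?QPQ l" for l
    using rayleigh_bound_sandwich[OF nonneg \<Gamma> that(2,1)] unfolding rayleigh_bound_def by simp
  have "rayleigh_bound \<pi> P (max lam 0)"
    using P(4) by (rule rayleigh_bound_mono[OF nonneg]) simp
  then have "rayleigh_bound \<pi> ?QPQ (max lam 0)" by (rule QPQ_bound[rotated]) simp
  moreover have "max lam 0 < 1" using P(5) by simp
  ultimately have "worst_asym_var \<pi> ?\<Gamma>P\<Gamma> \<le> worst_asym_var \<pi> ?QPQ"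
    by (rule worst_asym_var_mono[OF pos \<Gamma>P\<Gamma> QPQ _ _ \<Gamma>P\<Gamma>_bound])
  with \<open>worst_asym_var \<pi> ?QPQ \<le> worst_asym_var \<pi> P\<close> show ?thesis by blast
qed

section \<open>Orbit kernels\<close>

lemma orbit_eq_if_mem:
  assumes ga: "group_action G UNIV \<phi>" and y: "y \<in> orbit G \<phi> x"
  shows "orbit G \<phi> y = orbit G \<phi> x"
proof -
  have "x \<in> orbit G \<phi> y" using group_action.orbit_sym[OF ga _ _ y] by simp
  with y show ?thesis using group_action.orbit_trans[OF ga] by blast
qed

lemma orbit_sym_iff:
  assumes "group_action G UNIV \<phi>"
  shows "y \<in> orbit G \<phi> x \<longleftrightarrow> x \<in> orbit G \<phi> y"
  using group_action.orbit_sym[OF assms UNIV_I UNIV_I] by blast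

lemma card_orbit_pos:
  fixes \<phi> :: "'g \<Rightarrow> 'a::finite \<Rightarrow> 'a"
  assumes "group_action G UNIV \<phi>"
  shows "0 < card (orbit G \<phi> x)"
  using group_action.orbit_refl[OF assms UNIV_I, of x] by (auto simp: card_gt_0_iff)

lemma kapply_eq_self_if_constant_on_support:
  assumes "stochastic K" and const: "\<And>x y. K x y \<noteq> 0 \<Longrightarrow> h y = h x"
  shows "kapply K h = h"
proof
  fix x
  have "kapply K h x = (\<Sum>y\<in>UNIV. K x y * h x)"
    unfolding kapply_def by (intro sum.cong refl) (metis const mult_zero_left)
  also have "\<dots> = h x" using assms(1) by (simp add: stochastic_def sum_distrib_right[symmetric])
  finally show "kapply K h x = h x" .
qed

lemma gibbs_kernel_row_eq:
  assumes "group_action G UNIV \<phi>" "y \<in> orbit G \<phi> x"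
  shows "gibbs_kernel G \<phi> \<pi> y = gibbs_kernel G \<phi> \<pi> x"
  unfolding gibbs_kernel_def orbit_eq_if_mem[OF assms] ..

lemma stochastic_gibbs_kernel:
  assumes pos: "\<And>x. 0 < \<pi> x" and ga: "group_action G UNIV \<phi>"
  shows "stochastic (gibbs_kernel G \<phi> \<pi>)"
  unfolding stochastic_def
proof (intro conjI allI)
  fix x
  let ?O = "orbit G \<phi> x"
  have "0 < (\<Sum>z\<in>?O. \<pi> z)"
    using pos group_action.orbit_refl[OF ga UNIV_I, of x] by (intro sum_pos) auto
  then show "(\<Sum>y\<in>UNIV. gibbs_kernel G \<phi> \<pi> x y) = 1"
    unfolding gibbs_kernel_def by (simp add: sum.If_cases sum_divide_distrib[symmetric])
  fix y
  show "0 \<le> gibbs_kernel G \<phi> \<pi> x y"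
    unfolding gibbs_kernel_def using pos by (simp add: less_imp_le sum_nonneg)
qed

lemma reversible_gibbs_kernel:
  assumes ga: "group_action G UNIV \<phi>"
  shows "reversible \<pi> (gibbs_kernel G \<phi> \<pi>)"
  unfolding reversible_def
proof (intro allI)
  fix x y
  show "\<pi> x * gibbs_kernel G \<phi> \<pi> x y = \<pi> y * gibbs_kernel G \<phi> \<pi> y x"
  proof (cases "y \<in> orbit G \<phi> x")
    case True
    then have "x \<in> orbit G \<phi> y" "orbit G \<phi> y = orbit G \<phi> x"
      using orbit_sym_iff[OF ga] orbit_eq_if_mem[OF ga True] by blast+
    with True show ?thesis by (simp add: gibbs_kernel_def)
  next
    case False
    then have "x \<notin> orbit G \<phi> y" using orbit_sym_iff[OF ga] by blast
    with False show ?thesis by (simp add: gibbs_kernel_def)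
  qed
qed

definition acceptance_function :: "(real \<Rightarrow> real \<Rightarrow> real) \<Rightarrow> bool" where
  "acceptance_function acc \<longleftrightarrow>
     (\<forall>a b. 0 < a \<longrightarrow> 0 < b \<longrightarrow> 0 \<le> acc a b \<and> acc a b \<le> 1 \<and> a * acc a b = b * acc b a)"

lemma acceptance_function_metropolis: "acceptance_function (\<lambda>a b. min 1 (b / a))"
  unfolding acceptance_function_def by (auto simp: min_def field_simps)

lemma acceptance_function_barker: "acceptance_function (\<lambda>a b. b / (a + b))"
  unfolding acceptance_function_def by (auto simp: field_simps)

lemma orbit_mh_kernel_off_diag:
  "x \<noteq> y \<Longrightarrow> orbit_mh_kernel acc G \<phi> \<pi> x y
    = (if y \<in> orbit G \<phi> x then acc (\<pi> x) (\<pi> y) / (real (card (orbit G \<phi> x)) - 1) else 0)"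
  unfolding orbit_mh_kernel_def Let_def by simp

lemma orbit_mh_kernel_diag:
  "orbit_mh_kernel acc G \<phi> \<pi> x x = 1 - (\<Sum>z\<in>UNIV - {x}. orbit_mh_kernel acc G \<phi> \<pi> x z)"
proof -
  have "(\<Sum>z\<in>UNIV - {x}. orbit_mh_kernel acc G \<phi> \<pi> x z)
      = (\<Sum>z\<in>UNIV - {x}. if z \<in> orbit G \<phi> x - {x}
           then 1 / (real (card (orbit G \<phi> x)) - 1) * acc (\<pi> x) (\<pi> z) else 0)"
    unfolding orbit_mh_kernel_def Let_def by (intro sum.cong) auto
  then show ?thesis unfolding orbit_mh_kernel_def Let_def by simp
qed

lemma stochastic_orbit_mh_kernel:
  assumes pos: "\<And>x. 0 < \<pi> x" and ga: "group_action G UNIV \<phi>" and acc: "acceptance_function acc"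
  shows "stochastic (orbit_mh_kernel acc G \<phi> \<pi>)"
proof -
  let ?M = "orbit_mh_kernel acc G \<phi> \<pi>"
  have off_diag_bounds: "0 \<le> ?M x z \<and> ?M x z \<le> (if z \<in> orbit G \<phi> x - {x}
      then 1 / (real (card (orbit G \<phi> x)) - 1) else 0)" if "z \<noteq> x" for x z
  proof -
    have "1 \<le> card (orbit G \<phi> x)" using card_orbit_pos[OF ga] by (simp add: Suc_le_eq)
    then show ?thesis
      using that acc pos unfolding orbit_mh_kernel_off_diag[OF that[symmetric]] acceptance_function_def
      by (auto simp: divide_right_mono)
  qed
  have row_le: "(\<Sum>z\<in>UNIV - {x}. ?M x z) \<le> 1" for x
  proof -
    let ?O = "orbit G \<phi> x"
    have "(\<Sum>z\<in>UNIV - {x}. ?M x z) \<le> (\<Sum>z\<in>UNIV - {x}. if z \<in> ?O - {x} then 1 / (real (card ?O) - 1) else 0)"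
      using off_diag_bounds by (intro sum_mono) auto
    also have "\<dots> = (\<Sum>z\<in>(UNIV - {x}) \<inter> (?O - {x}). 1 / (real (card ?O) - 1))"
      by (rule sum.inter_restrict[symmetric]) simp
    also have "(UNIV - {x}) \<inter> (?O - {x}) = ?O - {x}" by blast
    also have "(\<Sum>z\<in>?O - {x}. 1 / (real (card ?O) - 1)) \<le> 1"
      using group_action.orbit_refl[OF ga UNIV_I, of x] card_orbit_pos[OF ga, of x] by (simp add: of_nat_diff)
    finally show ?thesis .
  qed
  show ?thesis
    unfolding stochastic_def
  proof (intro conjI allI)
    fix x y
    show "0 \<le> ?M x y"
      using off_diag_bounds[of y x] row_le[of x] orbit_mh_kernel_diag[of acc G \<phi> \<pi> x]
      by (cases "x = y") auto
  next
    fix x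
    have "(\<Sum>y\<in>UNIV. ?M x y) = ?M x x + (\<Sum>y\<in>UNIV - {x}. ?M x y)"
      by (simp add: sum.remove)
    then show "(\<Sum>y\<in>UNIV. ?M x y) = 1" by (simp add: orbit_mh_kernel_diag[of acc G \<phi> \<pi> x])
  qed
qed

lemma reversible_orbit_mh_kernel:
  assumes pos: "\<And>x. 0 < \<pi> x" and ga: "group_action G UNIV \<phi>" and acc: "acceptance_function acc"
  shows "reversible \<pi> (orbit_mh_kernel acc G \<phi> \<pi>)"
  unfolding reversible_def
proof (intro allI)
  fix x y
  show "\<pi> x * orbit_mh_kernel acc G \<phi> \<pi> x y = \<pi> y * orbit_mh_kernel acc G \<phi> \<pi> y x"
  proof (cases "x = y")
    case xy: False
    note off_diag = orbit_mh_kernel_off_diag[OF xy] orbit_mh_kernel_off_diag[OF xy[symmetric]]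
    show ?thesis
    proof (cases "y \<in> orbit G \<phi> x")
      case True
      then have "x \<in> orbit G \<phi> y" "orbit G \<phi> y = orbit G \<phi> x"
        using orbit_sym_iff[OF ga] orbit_eq_if_mem[OF ga True] by blast+
      moreover have "\<pi> x * acc (\<pi> x) (\<pi> y) = \<pi> y * acc (\<pi> y) (\<pi> x)"
        using acc pos unfolding acceptance_function_def by blast
      ultimately show ?thesis using True by (simp add: off_diag times_divide_eq_right)
    next
      case False
      then have "x \<notin> orbit G \<phi> y" using orbit_sym_iff[OF ga] by blast
      with False show ?thesis by (simp add: off_diag)
    qed
  qed simp
qed

lemma orbit_mh_kernel_fixes_gibbs_range:
  assumes pos: "\<And>x. 0 < \<pi> x" and ga: "group_action G UNIV \<phi>" and acc: "acceptance_function acc"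
  shows "kapply (orbit_mh_kernel acc G \<phi> \<pi>) (kapply (gibbs_kernel G \<phi> \<pi>) f) = kapply (gibbs_kernel G \<phi> \<pi>) f"
proof (rule kapply_eq_self_if_constant_on_support[OF stochastic_orbit_mh_kernel[OF pos ga acc]])
  fix x y assume "orbit_mh_kernel acc G \<phi> \<pi> x y \<noteq> 0"
  then have "x = y \<or> y \<in> orbit G \<phi> x" by (metis orbit_mh_kernel_off_diag)
  then show "kapply (gibbs_kernel G \<phi> \<pi>) f y = kapply (gibbs_kernel G \<phi> \<pi>) f x"
    unfolding kapply_def using gibbs_kernel_row_eq[OF ga] by auto
qed

theorem proposition4p2:
  fixes \<pi> :: "'a::finite \<Rightarrow> real" and P :: "'a \<Rightarrow> 'a \<Rightarrow> real"
    and G :: "('g, 'b) monoid_scheme" and \<phi> :: "'g \<Rightarrow> 'a \<Rightarrow> 'a"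
  assumes "pmf_full \<pi>"
    and "ergodic_kernel P"
    and "reversible \<pi> P"
    and "\<And>mu. kernel_eigenvalue P mu \<Longrightarrow> Im mu = 0 \<and> Re mu \<ge> 0"
    and "group G"
    and "group_action G UNIV \<phi>"
  shows "worst_asym_var \<pi> (kmult (kmult (gibbs_kernel G \<phi> \<pi>) P) (gibbs_kernel G \<phi> \<pi>))
           \<le> worst_asym_var \<pi> (kmult (kmult (metropolis_kernel G \<phi> \<pi>) P) (metropolis_kernel G \<phi> \<pi>))
       \<and> worst_asym_var \<pi> (kmult (kmult (metropolis_kernel G \<phi> \<pi>) P) (metropolis_kernel G \<phi> \<pi>))
           \<le> worst_asym_var \<pi> P
       \<and> worst_asym_var \<pi> (kmult (kmult (gibbs_kernel G \<phi> \<pi>) P) (gibbs_kernel G \<phi> \<pi>))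
           \<le> worst_asym_var \<pi> (kmult (kmult (barker_kernel G \<phi> \<pi>) P) (barker_kernel G \<phi> \<pi>))
       \<and> worst_asym_var \<pi> (kmult (kmult (barker_kernel G \<phi> \<pi>) P) (barker_kernel G \<phi> \<pi>))
           \<le> worst_asym_var \<pi> P"
proof -
  have pos: "\<And>x. 0 < \<pi> x" using assms(1) by (simp add: pmf_full_def)
  have st: "stochastic P" and irr: "irreducible_kernel P"
    using assms(2) by (simp_all add: ergodic_kernel_def)
  have sa: "self_adjoint \<pi> P" using assms(3) by (rule self_adjoint_if_reversible)
  have psd: "centered_psd \<pi> P"
    using assms(4) by (intro centered_psd_if_eigenvalues_nonneg[OF pos sa preserves_centered_if_stochastic[OF sa st]]) force
  obtain lam where lam: "rayleigh_bound \<pi> P lam" "lam < 1"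
    using rayleigh_bound_lt_1_if_irreducible[OF pos st assms(3) irr] by blast
  let ?\<Gamma> = "gibbs_kernel G \<phi> \<pi>"
  have comparison:
    "worst_asym_var \<pi> (kmult (kmult ?\<Gamma> P) ?\<Gamma>)
        \<le> worst_asym_var \<pi> (kmult (kmult (orbit_mh_kernel acc G \<phi> \<pi>) P) (orbit_mh_kernel acc G \<phi> \<pi>))
      \<and> worst_asym_var \<pi> (kmult (kmult (orbit_mh_kernel acc G \<phi> \<pi>) P) (orbit_mh_kernel acc G \<phi> \<pi>))
        \<le> worst_asym_var \<pi> P"
    if acc: "acceptance_function acc" for acc
    using sandwich_comparison[OF pos st assms(3) psd lam
        stochastic_gibbs_kernel[OF pos assms(6)] reversible_gibbs_kernel[OF assms(6)]
        stochastic_orbit_mh_kernel[OF pos assms(6) acc] reversible_orbit_mh_kernel[OF pos assms(6) acc]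
        orbit_mh_kernel_fixes_gibbs_range[OF pos assms(6) acc]] .
  show ?thesis
    using comparison[OF acceptance_function_metropolis] comparison[OF acceptance_function_barker]
    unfolding metropolis_kernel_def barker_kernel_def by blast
qed

end
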